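(* For every positive integer $n$ and every $\beta\ge 0$, there is a temporal graph $G$ on $n$ vertices and a source vertex $s$ of $G$ such that every single-source temporal $\beta$-additive spanner of $G$ with respect to $s$ has size $\Omega\big(\frac{n^2}{1+\beta}\big)$.
   Context: A temporal graph is an undirected graph $G=(V,E)$ with a labeling $\lambda:E\to\mathbb{N}^+$. A temporal path is a path whose traversed edges have non-decreasing labels in the order of traversal; its length is its number of edges, and $d_G(u,v)$ is the minimum length of a temporal path from $u$ to $v$ in $G$ ($+\infty$ if none). A single-source temporal $\beta$-additive spanner of $G$ w.r.t. $s$ is a subgraph $H$ with $V(H)=V$, $E(H)\subseteq E$ (same labels), such that $d_H(s,v)\le d_G(s,v)+\beta$ for every $v\in V$. Its size is its number of edges. *)

theory Defs
  imports Main "HOL-Library.Extended_Nat"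
begin

definition temporal_graph :: "nat \<Rightarrow> nat set set \<Rightarrow> (nat set \<Rightarrow> nat) \<Rightarrow> bool" where
  "temporal_graph n E lam \<longleftrightarrow>
     (\<forall>e\<in>E. \<exists>u v. e = {u, v} \<and> u \<noteq> v \<and> u < n \<and> v < n) \<and>
     (\<forall>e\<in>E. lam e > 0)"

definition temporal_path :: "nat set set \<Rightarrow> (nat set \<Rightarrow> nat) \<Rightarrow> nat list \<Rightarrow> bool" where
  "temporal_path E lam p \<longleftrightarrow>
     p \<noteq> [] \<and> distinct p \<and>
     (\<forall>i. Suc i < length p \<longrightarrow> {p ! i, p ! Suc i} \<in> E) \<and>
     (\<forall>i. i + 2 < length p \<longrightarrow> lam {p ! i, p ! Suc i} \<le> lam {p ! Suc i, p ! (i + 2)})"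

definition tdist :: "nat set set \<Rightarrow> (nat set \<Rightarrow> nat) \<Rightarrow> nat \<Rightarrow> nat \<Rightarrow> enat" where
  "tdist E lam u v =
     (INF p \<in> {p. temporal_path E lam p \<and> hd p = u \<and> last p = v}. enat (length p - 1))"

definition additive_spanner ::
  "nat \<Rightarrow> nat set set \<Rightarrow> (nat set \<Rightarrow> nat) \<Rightarrow> nat \<Rightarrow> real \<Rightarrow> nat set set \<Rightarrow> bool" where
  "additive_spanner n E lam s \<beta> H \<longleftrightarrow>
     H \<subseteq> E \<and>
     (\<forall>v<n. tdist E lam s v = \<infinity> \<or>
        (\<exists>k. tdist H lam s v = enat k \<and>
             real k \<le> real (the_enat (tdist E lam s v)) + \<beta>))"

end

theory Submission
  imports Defs
begin

(* Put D = floor beta + 1. Take W ~ n/(12(D+2)) paths P 0, ..., P (W-1) from the source, each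
   with 2K+1 ~ n/3 edges and ending in a target that lies on no other path, and label the edges
   so that labels increase along every path and all edges of P w come before those of P (w+1);
   a temporal path can then only move from a path to a later one. The paths zigzag between two
   vertex classes, consecutive paths being shifted by D in one class and by D+2 in the other:
   thus no edge is shared, and a vertex at position i of P w lies at position at most i - D on
   every later path. Hence a temporal path to the target of P w that ever leaves its current
   path arrives at least D > beta steps late, so every beta-additive spanner keeps all
   W(2K+1) = Omega(n^2/(1+beta)) edges. *)

lemma mult_add_le_imp_lex_le:
  fixes a a' b b' M :: nat
  assumes "a * M + b \<le> a' * M + b'" "b < M" "b' < M"
  shows "a < a' \<or> (a = a' \<and> b \<le> b')"
proof -
  have "a \<le> a'"
    using div_le_mono[OF assms(1), of M] assms(2,3) by simp
  then show ?thesis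
    using assms(1) by auto
qed

lemma temporal_path_not_Nil: "temporal_path E lam p \<Longrightarrow> p \<noteq> []"
  unfolding temporal_path_def by blast

lemma temporal_path_edge: "temporal_path E lam p \<Longrightarrow> Suc i < length p \<Longrightarrow> {p ! i, p ! Suc i} \<in> E"
  unfolding temporal_path_def by blast

lemma temporal_path_label_mono:
  "temporal_path E lam p \<Longrightarrow> Suc (Suc i) < length p \<Longrightarrow>
     lam {p ! i, p ! Suc i} \<le> lam {p ! Suc i, p ! Suc (Suc i)}"
  unfolding temporal_path_def by (metis add_2_eq_Suc')

lemma temporal_path_nth_neq:
  "temporal_path E lam p \<Longrightarrow> i < length p \<Longrightarrow> j < length p \<Longrightarrow> i \<noteq> j \<Longrightarrow> p ! i \<noteq> p ! j"
  unfolding temporal_path_def using nth_eq_iff_index_eq by blast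

lemma tdist_le_length:
  assumes "temporal_path E lam p" "hd p = u" "last p = v"
  shows "tdist E lam u v \<le> enat (length p - 1)"
  unfolding tdist_def using assms by (intro INF_lower2) auto

lemma tdist_attained:
  assumes "tdist E lam u v = enat k"
  obtains p where "temporal_path E lam p" "hd p = u" "last p = v" "length p - 1 = k"
proof -
  let ?S = "{p. temporal_path E lam p \<and> hd p = u \<and> last p = v}"
  have "?S \<noteq> {}"
  proof
    assume "?S = {}"
    then have "tdist E lam u v = \<infinity>"
      unfolding tdist_def by (simp only: INF_empty top_enat_def)
    with assms show False by simp
  qed
  then have "tdist E lam u v \<in> (\<lambda>p. enat (length p - 1)) ` ?S"
    unfolding tdist_def Inf_enat_def by (auto intro: LeastI)
  then show ?thesis
    using assms that by auto
qed

subsection \<open>Families of staggered paths\<close>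

locale staggered_paths =
  fixes n W M D s :: nat and P :: "nat \<Rightarrow> nat list"
  assumes W_pos: "0 < W"
    and length_P: "\<And>w. w < W \<Longrightarrow> 2 \<le> length (P w) \<and> length (P w) \<le> M"
    and P_nth_0: "\<And>w. w < W \<Longrightarrow> P w ! 0 = s"
    and distinct_P: "\<And>w. w < W \<Longrightarrow> distinct (P w)"
    and set_P: "\<And>w. w < W \<Longrightarrow> set (P w) \<subseteq> {..<n}"
    and last_P_private: "\<And>w w'. w < W \<Longrightarrow> w' < W \<Longrightarrow> w \<noteq> w' \<Longrightarrow> last (P w) \<notin> set (P w')"
    and P_shift: "\<And>w w' i i'. w < w' \<Longrightarrow> w' < W \<Longrightarrow>
       i < length (P w) \<Longrightarrow> i' < length (P w') \<Longrightarrow> P w ! i = P w' ! i' \<Longrightarrow> 0 < i \<Longrightarrow>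
       i' + D \<le> i"
    and P_edge_inj: "\<And>w w' m m'. w < W \<Longrightarrow> w' < W \<Longrightarrow>
       Suc m < length (P w) \<Longrightarrow> Suc m' < length (P w') \<Longrightarrow>
       {P w ! m, P w ! Suc m} = {P w' ! m', P w' ! Suc m'} \<Longrightarrow> w = w' \<and> m = m'"
begin

definition edge_index :: "(nat \<times> nat) set" where
  "edge_index = (SIGMA w:{..<W}. {..<length (P w) - 1})"

definition path_edge :: "nat \<times> nat \<Rightarrow> nat set" where
  "path_edge = (\<lambda>(w, m). {P w ! m, P w ! Suc m})"

definition edges :: "nat set set" where
  "edges = path_edge ` edge_index"

(* Lexicographic in (w, m), as m < M; arbitrary on sets that are not edges. *)
definition label :: "nat set \<Rightarrow> nat" where
  "label e = (case the_inv_into edge_index path_edge e of (w, m) \<Rightarrow> w * M + m + 1)"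

lemma mem_edge_index [simp]: "(w, m) \<in> edge_index \<longleftrightarrow> w < W \<and> Suc m < length (P w)"
  by (auto simp: edge_index_def)

lemma inj_on_path_edge: "inj_on path_edge edge_index"
proof (rule inj_onI)
  fix x y assume "x \<in> edge_index" "y \<in> edge_index" "path_edge x = path_edge y"
  moreover obtain w m w' m' where "x = (w, m)" "y = (w', m')"
    by (cases x, cases y)
  ultimately show "x = y"
    using P_edge_inj[of w w' m m'] by (simp add: path_edge_def)
qed

lemma path_edge_in_edges: "w < W \<Longrightarrow> Suc m < length (P w) \<Longrightarrow> {P w ! m, P w ! Suc m} \<in> edges"
  unfolding edges_def edge_index_def path_edge_def by force

lemma edgesE:
  assumes "e \<in> edges"
  obtains w m where "w < W" "Suc m < length (P w)" "e = {P w ! m, P w ! Suc m}"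
  using assms that unfolding edges_def edge_index_def path_edge_def by force

lemma label_path_edge:
  assumes "w < W" "Suc m < length (P w)"
  shows "label {P w ! m, P w ! Suc m} = w * M + m + 1"
proof -
  have "{P w ! m, P w ! Suc m} = path_edge (w, m)" "(w, m) \<in> edge_index"
    using assms by (auto simp: path_edge_def edge_index_def)
  then show ?thesis
    unfolding label_def using the_inv_into_f_f[OF inj_on_path_edge] by simp
qed

lemma finite_edges: "finite edges"
  unfolding edges_def edge_index_def by simp

lemma card_edges: "card edges = (\<Sum>w<W. length (P w) - 1)"
  unfolding edges_def card_image[OF inj_on_path_edge] by (simp add: edge_index_def card_SigmaI)

lemma P_nth_eq_iff:
  "w < W \<Longrightarrow> i < length (P w) \<Longrightarrow> j < length (P w) \<Longrightarrow> P w ! i = P w ! j \<longleftrightarrow> i = j"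
  using distinct_P nth_eq_iff_index_eq by blast

lemma P_nth_less: "w < W \<Longrightarrow> i < length (P w) \<Longrightarrow> P w ! i < n"
  using set_P nth_mem by blast

lemma source_less: "s < n"
  using P_nth_less[OF W_pos, of 0] P_nth_0[OF W_pos] length_P[OF W_pos] by force

lemma temporal_graph_edges: "temporal_graph n edges label"
  unfolding temporal_graph_def
proof (intro conjI ballI)
  fix e assume "e \<in> edges"
  then obtain w m where wm: "w < W" "Suc m < length (P w)" "e = {P w ! m, P w ! Suc m}"
    by (rule edgesE)
  then have "P w ! m \<noteq> P w ! Suc m" "P w ! m < n" "P w ! Suc m < n"
    using P_nth_eq_iff[OF wm(1), of m "Suc m"] P_nth_less[OF wm(1)] by auto
  then show "\<exists>u v. e = {u, v} \<and> u \<noteq> v \<and> u < n \<and> v < n"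
    using wm(3) by blast
  show "0 < label e"
    unfolding label_def by (simp split: prod.split)
qed

lemma temporal_path_P: "w < W \<Longrightarrow> temporal_path edges label (P w)"
  unfolding temporal_path_def
  using length_P[of w] distinct_P[of w] path_edge_in_edges[of w] label_path_edge[of w]
  by (auto simp: numeral_2_eq_2)

lemma label_le_imp_lex_le:
  assumes "w < W" "Suc m < length (P w)" "w' < W" "Suc m' < length (P w')"
    and "label {P w ! m, P w ! Suc m} \<le> label {P w' ! m', P w' ! Suc m'}"
  shows "w < w' \<or> (w = w' \<and> m \<le> m')"
  using assms length_P[OF assms(1)] length_P[OF assms(3)]
  by (intro mult_add_le_imp_lex_le[of w M m w' m']) (simp_all add: label_path_edge)

lemma P_nth_eq_source_iff:
  assumes "w < W" "i < length (P w)"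
  shows "P w ! i = s \<longleftrightarrow> i = 0"
proof -
  have "0 < length (P w)"
    by (rule le_less_trans[OF le0 assms(2)])
  then show ?thesis
    using P_nth_eq_iff[OF assms(1,2) \<open>0 < length (P w)\<close>] P_nth_0[OF assms(1)] by simp
qed

lemma source_edge_of_P:
  assumes "w < W" "Suc m < length (P w)" "s \<in> {P w ! m, P w ! Suc m}"
  shows "m = 0"
  using assms(3) P_nth_eq_source_iff[OF assms(1), of m] P_nth_eq_source_iff[OF assms(1,2)] assms(2)
  by auto

lemma consecutive_edges_of_P:
  assumes w: "w < W" and m: "Suc m < length (P w)" "Suc m' < length (P w)" "m \<le> m'"
    and xy: "{x, y} = {P w ! m, P w ! Suc m}" and yz: "{y, z} = {P w ! m', P w ! Suc m'}"
    and "x \<noteq> z"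
  shows "m' = Suc m \<and> y = P w ! m' \<and> z = P w ! Suc m'"
proof -
  have "m \<noteq> m'"
    using xy yz \<open>x \<noteq> z\<close> by (auto simp: doubleton_eq_iff)
  have "y \<in> {P w ! m, P w ! Suc m}" "y \<in> {P w ! m', P w ! Suc m'}"
    using xy yz by blast+
  then obtain a b where ab: "a \<in> {m, Suc m}" "b \<in> {m', Suc m'}" "y = P w ! a" "y = P w ! b"
    by blast
  then have "a = b"
    using P_nth_eq_iff[OF w, of a b] m by auto
  then have "m' = Suc m \<and> y = P w ! m'"
    using ab \<open>m \<noteq> m'\<close> \<open>m \<le> m'\<close> by auto
  moreover have "P w ! m' \<noteq> P w ! Suc m'"
    using P_nth_eq_iff[OF w, of m' "Suc m'"] m by simp
  ultimately show ?thesis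
    using yz by (auto simp: doubleton_eq_iff)
qed

lemma switch_lag:
  assumes "w < w'" "w' < W" "k < length (P w)" "0 < k" "Suc m < length (P w')"
    and yz: "{P w ! k, z} = {P w' ! m, P w' ! Suc m}"
    and "i < length (P w')" "z = P w' ! i"
  shows "i + D \<le> Suc k"
proof -
  from yz consider "P w ! k = P w' ! m" "z = P w' ! Suc m" | "P w ! k = P w' ! Suc m" "z = P w' ! m"
    unfolding doubleton_eq_iff by blast
  then show ?thesis
  proof cases
    case 1
    have "m + D \<le> k"
      using P_shift[OF assms(1-3) _ 1(1) assms(4)] assms(5) by simp
    moreover have "i = Suc m"
      using P_nth_eq_iff[OF assms(2,7,5)] 1(2) assms(8) by simp
    ultimately show ?thesis by simp
  next
    case 2
    have "Suc m + D \<le> k"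
      using P_shift[OF assms(1-3,5) 2(1) assms(4)] .
    moreover have "i = m"
      using P_nth_eq_iff[OF assms(2,7) Suc_lessD[OF assms(5)]] 2(2) assms(8) by simp
    ultimately show ?thesis by simp
  qed
qed

(* The invariant of a temporal path p whose j-th step uses an edge of P w: so far p has either
   followed P w from the source, or its current vertex lies at least D positions further back
   on P w. *)
definition on_or_behind :: "nat \<Rightarrow> nat list \<Rightarrow> nat \<Rightarrow> bool" where
  "on_or_behind w p j \<longleftrightarrow>
     (j < length (P w) \<and> (\<forall>l\<le>j. p ! l = P w ! l)) \<or>
     (\<forall>k<length (P w). p ! j = P w ! k \<longrightarrow> k + D \<le> j)"

lemma on_or_behind_index_le:
  assumes "on_or_behind w p j" "w < W" "k < length (P w)" "p ! j = P w ! k"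
  shows "k \<le> j"
  using assms P_nth_eq_iff[OF assms(2), of j k] unfolding on_or_behind_def by auto

lemma on_or_behind_Suc:
  assumes "on_or_behind w p j" "w < W" "Suc m < length (P w)"
    and "p ! j = P w ! m" "p ! Suc j = P w ! Suc m"
  shows "on_or_behind w p (Suc j)"
proof (cases "j < length (P w) \<and> (\<forall>l\<le>j. p ! l = P w ! l)")
  case True
  then have "j = m"
    using P_nth_eq_iff[OF assms(2), of j m] assms(3,4) by simp
  then show ?thesis
    using True assms(3,5) by (auto simp: on_or_behind_def le_Suc_eq)
next
  case False
  then have "m + D \<le> j"
    using assms(1,3,4) Suc_lessD unfolding on_or_behind_def by blast
  then show ?thesis
    using P_nth_eq_iff[OF assms(2), of "Suc m"] assms(3,5) by (auto simp: on_or_behind_def)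
qed

lemma on_or_behind_first_edge:
  assumes w: "w < W" "Suc m < length (P w)" and e: "{p ! 0, p ! Suc 0} = {P w ! m, P w ! Suc m}"
    and p0: "p ! 0 = s" and p1: "p ! Suc 0 \<noteq> s"
  shows "on_or_behind w p (Suc 0)"
proof -
  have "s \<in> {P w ! m, P w ! Suc m}"
    using e p0 by (metis insertI1)
  then have "m = 0"
    by (rule source_edge_of_P[OF w])
  then have "{s, p ! Suc 0} = {s, P w ! Suc 0}"
    using e p0 P_nth_0[OF w(1)] by simp
  then have "p ! Suc 0 = P w ! Suc 0"
    using p1 by (metis doubleton_eq_iff)
  then have "p ! l = P w ! l" if "l \<le> Suc 0" for l
    using that p0 P_nth_0[OF w(1)] by (cases l) auto
  then show ?thesis
    using w(2) \<open>m = 0\<close> unfolding on_or_behind_def by simp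
qed

lemma on_or_behind_switch:
  assumes on: "on_or_behind w' p (Suc j)" and "w' < w" "w < W"
    and m: "Suc m' < length (P w')" "Suc m < length (P w)"
    and e': "{p ! j, p ! Suc j} = {P w' ! m', P w' ! Suc m'}"
    and e: "{p ! Suc j, p ! Suc (Suc j)} = {P w ! m, P w ! Suc m}"
    and "p ! Suc j \<noteq> s"
  shows "on_or_behind w p (Suc (Suc j))"
proof -
  have "w' < W"
    using assms(2,3) by simp
  obtain k where k: "k \<in> {m', Suc m'}" "p ! Suc j = P w' ! k"
    using e' unfolding doubleton_eq_iff by blast
  have "k < length (P w')"
    using k(1) m(1) by auto
  moreover have "0 < k"
    using k(2) P_nth_0[OF \<open>w' < W\<close>] \<open>p ! Suc j \<noteq> s\<close> by (cases k) auto
  moreover have "{P w' ! k, p ! Suc (Suc j)} = {P w ! m, P w ! Suc m}"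
    using e k(2) by simp
  ultimately have lag: "i + D \<le> Suc k" if "i < length (P w)" "p ! Suc (Suc j) = P w ! i" for i
    using switch_lag[OF assms(2,3) _ _ m(2)] that by simp
  have "k \<le> Suc j"
    using on_or_behind_index_le[OF on \<open>w' < W\<close> \<open>k < length (P w')\<close> k(2)] .
  then have "\<forall>i<length (P w). p ! Suc (Suc j) = P w ! i \<longrightarrow> i + D \<le> Suc (Suc j)"
    using lag by (meson Suc_le_mono le_trans)
  then show ?thesis
    unfolding on_or_behind_def by blast
qed

lemma temporal_path_on_or_behind:
  assumes tp: "temporal_path H label p" and H: "H \<subseteq> edges" and p0: "p ! 0 = s"
  shows "Suc j < length p \<Longrightarrow> w < W \<Longrightarrow> Suc m < length (P w) \<Longrightarrow>
    {p ! j, p ! Suc j} = {P w ! m, P w ! Suc m} \<Longrightarrow> on_or_behind w p (Suc j)"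
proof (induction j arbitrary: w m)
  case 0
  have "p ! Suc 0 \<noteq> s"
    using temporal_path_nth_neq[OF tp 0(1) Suc_lessD[OF 0(1)]] p0 by simp
  then show ?case
    using on_or_behind_first_edge[OF 0(2-4) p0] by simp
next
  case (Suc j)
  then have j: "Suc j < length p" by simp
  have "{p ! j, p ! Suc j} \<in> edges"
    using temporal_path_edge[OF tp j] H by blast
  then obtain w' m' where w': "w' < W" "Suc m' < length (P w')"
    and e': "{p ! j, p ! Suc j} = {P w' ! m', P w' ! Suc m'}"
    by (rule edgesE)
  have IH: "on_or_behind w' p (Suc j)"
    using Suc.IH[OF j w' e'] .
  have "p ! j \<noteq> p ! Suc (Suc j)" "p ! Suc j \<noteq> s"
    using temporal_path_nth_neq[OF tp] Suc.prems(1) p0 temporal_path_not_Nil[OF tp] by auto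
  have "w' < w \<or> (w' = w \<and> m' \<le> m)"
    using temporal_path_label_mono[OF tp Suc.prems(1)] label_le_imp_lex_le[OF w' Suc.prems(2,3)]
    unfolding e' Suc.prems(4) by simp
  then show ?case
  proof
    assume "w' < w"
    then show ?case
      using on_or_behind_switch[OF IH _ Suc.prems(2) w'(2) Suc.prems(3) e' Suc.prems(4)]
        \<open>p ! Suc j \<noteq> s\<close> by simp
  next
    assume same: "w' = w \<and> m' \<le> m"
    then have "m = Suc m'" "p ! Suc j = P w ! m" "p ! Suc (Suc j) = P w ! Suc m"
      using consecutive_edges_of_P[OF Suc.prems(2) _ Suc.prems(3) _ _ Suc.prems(4)]
        w'(2) e' \<open>p ! j \<noteq> p ! Suc (Suc j)\<close> by auto
    then show ?case
      using on_or_behind_Suc[OF _ Suc.prems(2,3)] IH same by simp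
  qed
qed

lemma last_P_ne_source:
  assumes "w < W"
  shows "last (P w) \<noteq> s"
proof -
  have "P w \<noteq> []" "length (P w) - 1 < length (P w)" "length (P w) - 1 \<noteq> 0"
    using length_P[OF assms] by auto
  then show ?thesis
    using P_nth_eq_source_iff[OF assms] by (simp add: last_conv_nth)
qed

lemma temporal_path_to_last_P_on_or_behind:
  assumes w: "w < W" and tp: "temporal_path H label p" and H: "H \<subseteq> edges"
    and p0: "p ! 0 = s" and last: "last p = last (P w)" and i: "length p = Suc (Suc i)"
  shows "on_or_behind w p (Suc i)"
proof -
  have "{p ! i, p ! Suc i} \<in> edges"
    using temporal_path_edge[OF tp, of i] i H by auto
  then obtain w' m where w': "w' < W" "Suc m < length (P w')"
    and e: "{p ! i, p ! Suc i} = {P w' ! m, P w' ! Suc m}"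
    by (rule edgesE)
  have "p \<noteq> []"
    using i by auto
  then have "last p = p ! Suc i"
    using i by (simp add: last_conv_nth)
  moreover have "p ! Suc i \<in> {P w' ! m, P w' ! Suc m}"
    using e by blast
  ultimately have "last p \<in> set (P w')"
    using nth_mem[of m "P w'"] nth_mem[of "Suc m" "P w'"] w'(2) by auto
  then have "w' = w"
    using last_P_private[OF w w'(1)] last by auto
  then show ?thesis
    using temporal_path_on_or_behind[OF tp H p0, of i w' m] i w' e by simp
qed

lemma temporal_path_to_last_P:
  assumes w: "w < W" and tp: "temporal_path H label p" and H: "H \<subseteq> edges"
    and hd: "hd p = s" and last: "last p = last (P w)" and short: "length p < length (P w) + D"
  shows "p = P w"
proof -
  have "p \<noteq> []" "P w \<noteq> []"
    using temporal_path_not_Nil[OF tp] length_P[OF w] by auto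
  then have p0: "p ! 0 = s" and last_P: "last (P w) = P w ! (length (P w) - 1)"
    using hd by (simp_all add: hd_conv_nth last_conv_nth)
  have "length p \<noteq> 1"
    using last_P_ne_source[OF w] last p0 \<open>p \<noteq> []\<close> by (auto simp: last_conv_nth)
  with \<open>p \<noteq> []\<close> obtain i where i: "length p = Suc (Suc i)"
    by (metis One_nat_def length_0_conv not0_implies_Suc)
  then have pi: "p ! Suc i = P w ! (length (P w) - 1)"
    using last last_P \<open>p \<noteq> []\<close> by (simp add: last_conv_nth)
  note on = temporal_path_to_last_P_on_or_behind[OF w tp H p0 last i]
  have "length (P w) - 1 \<le> Suc i"
    using on_or_behind_index_le[OF on w, of "length (P w) - 1"] pi \<open>P w \<noteq> []\<close> by simp
  moreover have "\<not> length (P w) - 1 + D \<le> Suc i"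
    using short i by simp
  then have "Suc i < length (P w)" "\<forall>l\<le>Suc i. p ! l = P w ! l"
    using on pi \<open>P w \<noteq> []\<close> unfolding on_or_behind_def by auto
  ultimately show ?thesis
    using i by (intro nth_equalityI) auto
qed

lemma spanner_contains_edges:
  assumes \<beta>: "\<beta> < real D" and sp: "additive_spanner n edges label s \<beta> H"
  shows "edges \<subseteq> H"
proof
  fix e assume "e \<in> edges"
  then obtain w m where wm: "w < W" "Suc m < length (P w)" "e = {P w ! m, P w ! Suc m}"
    by (rule edgesE)
  have "P w \<noteq> []"
    using length_P[OF wm(1)] by auto
  then have "hd (P w) = s" "last (P w) < n"
    using P_nth_0[OF wm(1)] P_nth_less[OF wm(1)] by (auto simp: hd_conv_nth last_conv_nth)
  then obtain d where d: "tdist edges label s (last (P w)) = enat d" "d \<le> length (P w) - 1"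
    using tdist_le_length[OF temporal_path_P[OF wm(1)]] by (metis enat_ile enat_ord_simps(1))
  with sp \<open>last (P w) < n\<close> obtain k
    where k: "tdist H label s (last (P w)) = enat k" "real k \<le> real d + \<beta>"
    unfolding additive_spanner_def by auto
  obtain p where p: "temporal_path H label p" "hd p = s" "last p = last (P w)" "length p - 1 = k"
    by (rule tdist_attained[OF k(1)])
  have "length p < length (P w) + D"
    using k(2) d(2) p(4) \<beta> temporal_path_not_Nil[OF p(1)] length_P[OF wm(1)] by linarith
  then have "p = P w"
    using temporal_path_to_last_P[OF wm(1) p(1)] sp p(2,3) by (simp add: additive_spanner_def)
  then show "e \<in> H"
    using temporal_path_edge[OF p(1)] wm by simp
qed

lemma card_spanner_ge:
  assumes "\<beta> < real D" "additive_spanner n edges label s \<beta> H"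
  shows "(\<Sum>w<W. length (P w) - 1) \<le> card H"
proof -
  have "H \<subseteq> edges"
    using assms(2) by (simp add: additive_spanner_def)
  then show ?thesis
    using spanner_contains_edges[OF assms] finite_edges card_edges by (metis card_mono finite_subset)
qed

end

subsection \<open>Zigzag paths\<close>

(* vtx r x is vertex x of class r < 3; class 0 holds the source vtx 0 0 and the targets. *)
definition vtx :: "nat \<Rightarrow> nat \<Rightarrow> nat" where
  "vtx r x = 3 * x + r"

lemma vtx_eq_iff [simp]: "r < 3 \<Longrightarrow> r' < 3 \<Longrightarrow> vtx r x = vtx r' y \<longleftrightarrow> r = r' \<and> x = y"
  unfolding vtx_def by presburger

definition zigzag_vertex :: "nat \<Rightarrow> nat \<Rightarrow> nat \<Rightarrow> nat \<Rightarrow> nat" where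
  "zigzag_vertex K D w k =
     (if k = 0 then vtx 0 0 else if k = 2*K+1 then vtx 0 (w+1)
      else if odd k then vtx 1 (D*w + (k-1) div 2) else vtx 2 ((D+2)*w + (k-2) div 2))"

lemma zigzag_vertex_cases:
  assumes "k < 2*K+2"
  obtains "k = 0" "zigzag_vertex K D w k = vtx 0 0"
  | "k = 2*K+1" "zigzag_vertex K D w k = vtx 0 (w+1)"
  | a where "a < K" "k = 2*a+1" "zigzag_vertex K D w k = vtx 1 (D*w+a)"
  | a where "a < K" "k = 2*a+2" "zigzag_vertex K D w k = vtx 2 ((D+2)*w+a)"
proof -
  consider "k = 0" | "k = 2*K+1" | a where "k = 2*a+1" "k \<noteq> 2*K+1" | a where "k = 2*a+2"
  proof (cases "even k")
    case True
    then obtain b where "k = 2*b" by blast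
    then show ?thesis using that by (cases b) auto
  next
    case False
    then obtain a where "k = 2*a+1" using oddE by blast
    then show ?thesis using that by (cases "k = 2*K+1") auto
  qed
  then show ?thesis
    using assms that by cases (auto simp: zigzag_vertex_def)
qed

lemma zigzag_vertex_inj:
  assumes "i < 2*K+2" "i' < 2*K+2" "zigzag_vertex K D w i = zigzag_vertex K D w i'"
  shows "i = i'"
  by (cases rule: zigzag_vertex_cases[OF assms(1), where D=D and w=w];
      cases rule: zigzag_vertex_cases[OF assms(2), where D=D and w=w]) (use assms(3) in auto)

lemma zigzag_vertex_shift:
  assumes "w < w'" "i < 2*K+2" "i' < 2*K+2" "zigzag_vertex K D w i = zigzag_vertex K D w' i'" "0 < i"
  shows "i' + D \<le> i"
proof -
  have "w + 1 \<le> w'" using assms(1) by simp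
  then have "D*(w+1) \<le> D*w'" "(D+2)*(w+1) \<le> (D+2)*w'"
    by (rule mult_le_mono2)+
  then have "D*w + D \<le> D*w'" "(D+2)*w + (D+2) \<le> (D+2)*w'"
    by (simp_all add: algebra_simps)
  then show ?thesis
    by (cases rule: zigzag_vertex_cases[OF assms(2), where D=D and w=w];
        cases rule: zigzag_vertex_cases[OF assms(3), where D=D and w=w']) (use assms(4,5) in auto)
qed

lemma zigzag_edge_cases:
  assumes "0 < K" "Suc m < 2*K+2" "E = {zigzag_vertex K D w m, zigzag_vertex K D w (Suc m)}"
  obtains "m = 0" "E = {vtx 0 0, vtx 1 (D*w)}"
  | a where "a < K" "m = 2*a+1"
      "E = {vtx 1 (D*w+a), vtx 2 ((D+2)*w+a)}"
  | a where "Suc a < K" "m = 2*a+2"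
      "E = {vtx 2 ((D+2)*w+a), vtx 1 (D*w+Suc a)}"
  | "m = 2*K" "E = {vtx 2 ((D+2)*w+(K-1)), vtx 0 (w+1)}"
proof -
  have "m < 2*K+2" using assms(2) by simp
  then show ?thesis
  proof (cases rule: zigzag_vertex_cases[where D=D and w=w])
    case 1
    then show ?thesis using that(1) assms by (simp add: zigzag_vertex_def)
  next
    case 2
    then show ?thesis using assms by simp
  next
    case (3 a)
    then show ?thesis using assms(3) by (intro that(2)[of a]) (simp_all add: zigzag_vertex_def)
  next
    case (4 a)
    show ?thesis
    proof (cases "Suc a < K")
      case True
      then show ?thesis using 4 assms(3) by (intro that(3)[of a]) (simp_all add: zigzag_vertex_def)
    next
      case False
      then have "K = Suc a" using 4 assms(2) by simp
      then show ?thesis using 4 assms(3) by (intro that(4)) (simp_all add: zigzag_vertex_def)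
    qed
  qed
qed

lemma zigzag_edge_inj:
  assumes "0 < K" "0 < D" "Suc m < 2*K+2" "Suc m' < 2*K+2"
    and "{zigzag_vertex K D w m, zigzag_vertex K D w (Suc m)} =
      {zigzag_vertex K D w' m', zigzag_vertex K D w' (Suc m')}"
  shows "w = w' \<and> m = m'"
proof -
  (* An edge between vtx 1 x and vtx 2 y of path w has y - x = 2w or 2w - 1, depending on the
     parity of its position; this determines w, and then the position. *)
  define E where "E = {zigzag_vertex K D w m, zigzag_vertex K D w (Suc m)}"
  have E': "E = {zigzag_vertex K D w' m', zigzag_vertex K D w' (Suc m')}"
    using assms(5) E_def by simp
  define X X' where "X = D*w" and "X' = D*w'"
  have "X = X' \<longleftrightarrow> w = w'" using assms(2) by (simp add: X_def X'_def)
  then show ?thesis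
    by (cases rule: zigzag_edge_cases[OF assms(1,3) E_def, unfolded add_mult_distrib, folded X_def];
        cases rule: zigzag_edge_cases[OF assms(1,4) E', unfolded add_mult_distrib, folded X'_def])
      (auto simp: doubleton_eq_iff Suc_double_not_eq_double double_not_eq_Suc_double)
qed

lemma zigzag_vertex_eq_target:
  assumes "k < 2*K+2" "zigzag_vertex K D w' k = vtx 0 (w+1)"
  shows "w' = w"
  by (cases rule: zigzag_vertex_cases[OF assms(1), where D=D and w=w']) (use assms(2) in auto)

lemma zigzag_vertex_less:
  assumes "w < W" "k < 2*K+2" "3 * ((D+2) * (W-1) + K) \<le> n" "3 * W < n"
  shows "zigzag_vertex K D w k < n"
proof -
  have "(D+2) * w \<le> (D+2) * (W-1)"
    using assms(1) by (intro mult_le_mono2) simp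
  moreover have "D * w \<le> (D+2) * w"
    by (intro mult_le_mono1) simp
  ultimately show ?thesis
    using assms by (cases rule: zigzag_vertex_cases[OF assms(2), where D=D and w=w]) (auto simp: vtx_def)
qed

definition zigzag_path :: "nat \<Rightarrow> nat \<Rightarrow> nat \<Rightarrow> nat list" where
  "zigzag_path K D w = map (zigzag_vertex K D w) [0..<2*K+2]"

lemma length_zigzag_path [simp]: "length (zigzag_path K D w) = 2*K+2"
  by (simp add: zigzag_path_def del: upt_Suc)

lemma nth_zigzag_path [simp]: "k < 2*K+2 \<Longrightarrow> zigzag_path K D w ! k = zigzag_vertex K D w k"
  by (simp add: zigzag_path_def del: upt_Suc)

lemma staggered_paths_zigzag:
  assumes "0 < K" "0 < D" "0 < W" "3 * ((D+2) * (W-1) + K) \<le> n" "3 * W < n"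
  shows "staggered_paths n W (2*K+2) D 0 (zigzag_path K D)"
proof
  fix w
  show "zigzag_path K D w ! 0 = 0"
    by (simp add: zigzag_vertex_def vtx_def)
  show "distinct (zigzag_path K D w)"
    using zigzag_vertex_inj by (auto simp: distinct_conv_nth)
  show "w < W \<Longrightarrow> set (zigzag_path K D w) \<subseteq> {..<n}"
    using zigzag_vertex_less[OF _ _ assms(4,5)] by (auto simp: in_set_conv_nth)
next
  fix w w'
  have "last (zigzag_path K D w) = vtx 0 (w+1)"
    by (simp add: zigzag_path_def last_map zigzag_vertex_def)
  then show "w \<noteq> w' \<Longrightarrow> last (zigzag_path K D w) \<notin> set (zigzag_path K D w')"
    using zigzag_vertex_eq_target by (fastforce simp: in_set_conv_nth)
next
  fix w w' i i'
  assume "w < w'" "i < length (zigzag_path K D w)" "i' < length (zigzag_path K D w')"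
    "zigzag_path K D w ! i = zigzag_path K D w' ! i'" "0 < i"
  then show "i' + D \<le> i"
    by (intro zigzag_vertex_shift[of w w' i K i']) simp_all
next
  fix w w' m m'
  assume "Suc m < length (zigzag_path K D w)" "Suc m' < length (zigzag_path K D w')"
    "{zigzag_path K D w ! m, zigzag_path K D w ! Suc m} =
     {zigzag_path K D w' ! m', zigzag_path K D w' ! Suc m'}"
  then show "w = w' \<and> m = m'"
    using assms(1,2) by (intro zigzag_edge_inj) simp_all
qed (simp_all add: assms(3))

lemma zigzag_parameters:
  fixes n D :: nat
  assumes "12 \<le> n" "0 < D"
  defines "K \<equiv> n div 6" and "W \<equiv> n div (12 * (D+2)) + 1"
  shows "0 < K" "3 * ((D+2) * (W-1) + K) \<le> n" "3 * W < n"
    and "(real n)\<^sup>2 \<le> 72 * (real D + 2) * (real W * real (2*K+1))"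
proof -
  define q where "q = n div (12 * (D+2))"
  have q: "q * (12 * (D+2)) \<le> n" "n < 12 * (D+2) + q * (12 * (D+2))"
    unfolding q_def by (simp_all add: dividend_less_div_times)
  have K: "K * 6 \<le> n" "n < 6 + K * 6"
    unfolding K_def by (simp_all add: dividend_less_div_times)
  have W: "W = q + 1"
    unfolding W_def q_def ..
  have "q \<le> D * q"
    using assms(2) by simp
  then show "0 < K" "3 * ((D+2) * (W-1) + K) \<le> n" "3 * W < n"
    using q K assms(1) unfolding W by (simp_all add: algebra_simps)
  have "n \<le> W * (12 * (D + 2))" "n \<le> 6 * (2*K+1)"
    using q(2) K(2) unfolding W by (simp_all add: algebra_simps)
  then have "real n \<le> real (W * (12 * (D + 2)))" "real n \<le> real (6 * (2*K+1))"
    by (simp_all only: of_nat_le_iff)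
  then have "real n \<le> real W * (12 * (real D + 2))" "real n \<le> 6 * real (2*K+1)"
    by (simp_all add: algebra_simps)
  then have "real n * real n \<le> (real W * (12 * (real D + 2))) * (6 * real (2*K+1))"
    by (intro mult_mono) auto
  then show "(real n)\<^sup>2 \<le> 72 * (real D + 2) * (real W * real (2*K+1))"
    by (simp add: power2_eq_square algebra_simps)
qed

lemma zigzag_spanner_lower_bound:
  fixes \<beta> :: real
  assumes n: "12 \<le> n" and \<beta>: "0 \<le> \<beta>"
  shows "\<exists>E lam s. temporal_graph n E lam \<and> s < n \<and>
           (\<forall>H. additive_spanner n E lam s \<beta> H \<longrightarrow>
              (real n)\<^sup>2 / (216 * (1 + \<beta>)) \<le> real (card H))"
proof -
  define D where "D = nat \<lfloor>\<beta>\<rfloor> + 1"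
  define K W where "K = n div 6" and "W = n div (12 * (D+2)) + 1"
  have "0 < D" "\<beta> < real D" "real D \<le> \<beta> + 1"
    using \<beta> unfolding D_def by linarith+
  then have D: "0 < D" "\<beta> < real D" "72 * (real D + 2) \<le> 216 * (1 + \<beta>)"
    using \<beta> by (simp_all add: algebra_simps)
  note params = zigzag_parameters[OF n D(1), folded K_def W_def]
  interpret staggered_paths n W "2*K+2" D 0 "zigzag_path K D"
    by (rule staggered_paths_zigzag[OF params(1) D(1) _ params(2,3)]) (simp add: W_def)
  have "real W * real (2*K+1) \<le> real (card H)" if "additive_spanner n edges label 0 \<beta> H" for H
  proof -
    have "W * (2*K+1) \<le> card H"
      using card_spanner_ge[OF D(2) that] by simp
    then show ?thesis
      by (metis of_nat_le_iff of_nat_mult)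
  qed
  moreover have "(real n)\<^sup>2 \<le> 216 * (1 + \<beta>) * (real W * real (2*K+1))"
    using params(4) mult_right_mono[OF D(3), of "real W * real (2*K+1)"] by simp
  then have "(real n)\<^sup>2 / (216 * (1 + \<beta>)) \<le> real W * real (2*K+1)"
    using \<beta> by (simp add: field_simps)
  ultimately show ?thesis
    using temporal_graph_edges source_less by (intro exI[of _ edges] exI[of _ label] exI[of _ 0]) force
qed

theorem theorem13:
  shows "\<exists>c::real > 0. \<exists>N::nat. \<forall>n \<ge> N. \<forall>\<beta>::real \<ge> 0.
           \<exists>E lam s. temporal_graph n E lam \<and> s < n \<and>
             (\<forall>H. additive_spanner n E lam s \<beta> H \<longrightarrow>
                  real (card H) \<ge> c * (real n)\<^sup>2 / (1 + \<beta>))"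
proof (intro exI[of _ "1/216"] conjI allI impI exI[of _ 12])
  fix n :: nat and \<beta> :: real
  assume "12 \<le> n" "0 \<le> \<beta>"
  then show "\<exists>E lam s. temporal_graph n E lam \<and> s < n \<and>
      (\<forall>H. additive_spanner n E lam s \<beta> H \<longrightarrow> real (card H) \<ge> 1/216 * (real n)\<^sup>2 / (1 + \<beta>))"
    using zigzag_spanner_lower_bound by simp
qed simp

end
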